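(* Let $X$ be a collectionwise normal space with $\operatorname{ind} X=0$, and let $A$ be a discrete subset of $X$. Then there exists a pairwise disjoint family $\{V_a : a\in A\}$ of clopen subsets of $X$ such that $a\in V_a$ for each $a\in A$ and the set $X\setminus\bigcup_{a\in A}V_a$ is clopen.
   Context: A space $X$ is collectionwise normal if it is $T_1$ and for every discrete family $\{F_s\}_{s\in S}$ of closed subsets of $X$ there is a discrete family $\{V_s\}_{s\in S}$ of open sets with $F_s\subseteq V_s$ for all $s$. A family of subsets is discrete if each point has a neighbourhood meeting at most one member; a subset $D$ is discrete if the family of its singletons is discrete. $\operatorname{ind}$ denotes the small inductive dimension. *)

theory Defs
  imports "HOL-Analysis.Analysis"
begin

definition discrete_family :: "'a topology \<Rightarrow> 'i set \<Rightarrow> ('i \<Rightarrow> 'a set) \<Rightarrow> bool" where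
  "discrete_family X S F \<longleftrightarrow>
     (\<forall>x\<in>topspace X. \<exists>U. openin X U \<and> x \<in> U \<and>
        (\<forall>s\<in>S. \<forall>t\<in>S. F s \<inter> U \<noteq> {} \<and> F t \<inter> U \<noteq> {} \<longrightarrow> s = t))"

definition discrete_subset :: "'a topology \<Rightarrow> 'a set \<Rightarrow> bool" where
  "discrete_subset X D \<longleftrightarrow> D \<subseteq> topspace X \<and> discrete_family X D (\<lambda>d. {d})"

definition collectionwise_normal :: "'a topology \<Rightarrow> bool" where
  "collectionwise_normal X \<longleftrightarrow> t1_space X \<and>
     (\<forall>\<F>. (\<forall>F\<in>\<F>. closedin X F) \<and> discrete_family X \<F> id \<longrightarrow>
        (\<exists>V. (\<forall>F\<in>\<F>. openin X (V F) \<and> F \<subseteq> V F) \<and> discrete_family X \<F> V))"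

text \<open>Small inductive dimension zero: X is nonempty (ind of the empty space is -1) and
every point has arbitrarily small open neighbourhoods with empty boundary, i.e. clopen ones.\<close>
definition ind_zero :: "'a topology \<Rightarrow> bool" where
  "ind_zero X \<longleftrightarrow> topspace X \<noteq> {} \<and>
     (\<forall>x\<in>topspace X. \<forall>U. openin X U \<and> x \<in> U \<longrightarrow>
        (\<exists>V. openin X V \<and> X frontier_of V = {} \<and> x \<in> V \<and> V \<subseteq> U))"

end

theory Submission
  imports Defs
begin

text \<open>Collectionwise normality expands the discrete family of closed singletons \<open>{a}\<close>
to a discrete family of open neighbourhoods \<open>U a\<close>, and dimension zero shrinks each \<open>U a\<close>
to a clopen \<open>V a \<ni> a\<close>. A shrinking of a discrete family is still discrete, so the \<open>V a\<close>
are pairwise disjoint and form a locally finite family of closed sets. Their union is thus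
closed as well as open, and so is its complement.\<close>

lemma discrete_familyD:
  assumes "discrete_family X S F" and "x \<in> topspace X"
  obtains U where "openin X U" "x \<in> U"
    "\<And>s t. \<lbrakk>s \<in> S; t \<in> S; F s \<inter> U \<noteq> {}; F t \<inter> U \<noteq> {}\<rbrakk> \<Longrightarrow> s = t"
  using assms unfolding discrete_family_def by metis

lemma discrete_family_mono:
  assumes "discrete_family X S F" and "\<And>s. s \<in> S \<Longrightarrow> G s \<subseteq> F s"
  shows "discrete_family X S G"
  using assms unfolding discrete_family_def by (meson disjoint_eq_subset_Compl subset_trans)

lemma discrete_family_image_iff:
  assumes "inj_on g S"
  shows "discrete_family X (g ` S) F \<longleftrightarrow> discrete_family X S (F \<circ> g)"
proof -
  have "(\<forall>s\<in>g ` S. \<forall>t\<in>g ` S. F s \<inter> U \<noteq> {} \<and> F t \<inter> U \<noteq> {} \<longrightarrow> s = t) \<longleftrightarrow>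
        (\<forall>s\<in>S. \<forall>t\<in>S. (F \<circ> g) s \<inter> U \<noteq> {} \<and> (F \<circ> g) t \<inter> U \<noteq> {} \<longrightarrow> s = t)" for U
    using assms by (simp add: inj_on_eq_iff)
  then show ?thesis
    unfolding discrete_family_def by simp
qed

lemma discrete_family_disjoint:
  assumes "discrete_family X S F" and "F s \<subseteq> topspace X" and "s \<in> S" "t \<in> S" "s \<noteq> t"
  shows "F s \<inter> F t = {}"
proof (rule ccontr)
  assume "F s \<inter> F t \<noteq> {}"
  then obtain x where x: "x \<in> F s" "x \<in> F t" by blast
  with assms(2) have "x \<in> topspace X" by blast
  then obtain U where "openin X U" "x \<in> U"
      and "\<And>s t. \<lbrakk>s \<in> S; t \<in> S; F s \<inter> U \<noteq> {}; F t \<inter> U \<noteq> {}\<rbrakk> \<Longrightarrow> s = t"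
    using discrete_familyD[OF assms(1)] by metis
  with x assms(3-5) show False by blast
qed

lemma locally_finite_in_discrete_family:
  assumes "discrete_family X S F" and "\<And>s. s \<in> S \<Longrightarrow> F s \<subseteq> topspace X"
  shows "locally_finite_in X (F ` S)"
  unfolding locally_finite_in_def
proof (intro conjI ballI)
  show "\<Union> (F ` S) \<subseteq> topspace X"
    using assms(2) by blast
next
  fix x assume "x \<in> topspace X"
  then obtain U where U: "openin X U" "x \<in> U"
      and at_most_one: "\<And>s t. \<lbrakk>s \<in> S; t \<in> S; F s \<inter> U \<noteq> {}; F t \<inter> U \<noteq> {}\<rbrakk> \<Longrightarrow> s = t"
    using discrete_familyD[OF assms(1)] by metis
  have "finite {T \<in> F ` S. T \<inter> U \<noteq> {}}"
  proof (cases "\<exists>s\<in>S. F s \<inter> U \<noteq> {}")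
    case True
    then obtain s where "s \<in> S" "F s \<inter> U \<noteq> {}" by blast
    with at_most_one have "{T \<in> F ` S. T \<inter> U \<noteq> {}} \<subseteq> {F s}"
      by auto
    then show ?thesis
      by (rule finite_subset) simp
  next
    case False
    then have "{T \<in> F ` S. T \<inter> U \<noteq> {}} = {}"
      by blast
    then show ?thesis
      by (metis finite.emptyI)
  qed
  with U show "\<exists>U. openin X U \<and> x \<in> U \<and> finite {T \<in> F ` S. T \<inter> U \<noteq> {}}"
    by blast
qed

lemma collectionwise_normal_discrete_subset_nbhds:
  assumes "collectionwise_normal X" and "discrete_subset X A"
  obtains U where "\<And>a. a \<in> A \<Longrightarrow> openin X (U a) \<and> a \<in> U a" and "discrete_family X A U"
proof -
  let ?\<F> = "(\<lambda>a. {a}) ` A"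
  have t1: "t1_space X"
    and expand: "\<And>\<F>. (\<forall>F\<in>\<F>. closedin X F) \<and> discrete_family X \<F> id \<Longrightarrow>
        \<exists>V. (\<forall>F\<in>\<F>. openin X (V F) \<and> F \<subseteq> V F) \<and> discrete_family X \<F> V"
    using assms(1) unfolding collectionwise_normal_def by blast+
  have inj: "inj_on (\<lambda>a. {a}) A"
    by (simp add: inj_on_def)
  have A: "A \<subseteq> topspace X" and "discrete_family X A (\<lambda>a. {a})"
    using assms(2) unfolding discrete_subset_def by auto
  then have "discrete_family X ?\<F> id"
    using discrete_family_image_iff[OF inj, of X id] by simp
  moreover have "\<forall>F \<in> ?\<F>. closedin X F"
    using A closedin_t1_singleton[OF t1] by blast
  ultimately have "\<exists>W. (\<forall>F \<in> ?\<F>. openin X (W F) \<and> F \<subseteq> W F) \<and> discrete_family X ?\<F> W"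
    by (intro expand conjI)
  then obtain W where W: "\<forall>F \<in> ?\<F>. openin X (W F) \<and> F \<subseteq> W F"
      and "discrete_family X ?\<F> W"
    by blast
  then have "discrete_family X A (W \<circ> (\<lambda>a. {a}))"
    using discrete_family_image_iff[OF inj, of X W] by simp
  with W show thesis
    by (intro that[of "W \<circ> (\<lambda>a. {a})"]) auto
qed

lemma ind_zero_clopen_nbhd:
  assumes "ind_zero X" and "openin X U" and "x \<in> U"
  shows "\<exists>V. openin X V \<and> closedin X V \<and> x \<in> V \<and> V \<subseteq> U"
proof -
  have "x \<in> topspace X"
    using assms(2,3) openin_subset by blast
  then obtain V where V: "openin X V" "X frontier_of V = {}" "x \<in> V" "V \<subseteq> U"
    using assms unfolding ind_zero_def by blast
  then have "closedin X V"
    using frontier_of_eq_empty[OF openin_subset] by blast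
  with V show ?thesis
    by blast
qed

theorem mainTheorem4:
  fixes X :: "'a topology" and A :: "'a set"
  assumes "collectionwise_normal X" and "ind_zero X" and "discrete_subset X A"
  shows "\<exists>V :: 'a \<Rightarrow> 'a set.
           (\<forall>a\<in>A. openin X (V a) \<and> closedin X (V a) \<and> a \<in> V a) \<and>
           (\<forall>a\<in>A. \<forall>b\<in>A. a \<noteq> b \<longrightarrow> V a \<inter> V b = {}) \<and>
           openin X (topspace X - (\<Union>a\<in>A. V a)) \<and>
           closedin X (topspace X - (\<Union>a\<in>A. V a))"
proof -
  obtain U where U: "\<And>a. a \<in> A \<Longrightarrow> openin X (U a) \<and> a \<in> U a"
      and "discrete_family X A U"
    using collectionwise_normal_discrete_subset_nbhds assms(1,3) by blast
  have "\<forall>a\<in>A. \<exists>W. openin X W \<and> closedin X W \<and> a \<in> W \<and> W \<subseteq> U a"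
    using ind_zero_clopen_nbhd[OF assms(2)] U by blast
  then obtain V where V: "\<And>a. a \<in> A \<Longrightarrow> openin X (V a) \<and> closedin X (V a) \<and> a \<in> V a \<and> V a \<subseteq> U a"
    by metis
  have V_discrete: "discrete_family X A V"
    using \<open>discrete_family X A U\<close> by (rule discrete_family_mono) (use V in blast)
  have V_top: "\<And>a. a \<in> A \<Longrightarrow> V a \<subseteq> topspace X"
    using V openin_subset by blast
  have clopen: "\<forall>a\<in>A. openin X (V a) \<and> closedin X (V a) \<and> a \<in> V a"
    using V by blast
  have disjoint: "\<forall>a\<in>A. \<forall>b\<in>A. a \<noteq> b \<longrightarrow> V a \<inter> V b = {}"
    using discrete_family_disjoint[OF V_discrete V_top] by blast
  have "openin X (\<Union>a\<in>A. V a)"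
    by (rule openin_Union) (use clopen in blast)
  then have "closedin X (topspace X - (\<Union>a\<in>A. V a))"
    by (rule closedin_diff[OF closedin_topspace])
  have "closedin X (\<Union>a\<in>A. V a)"
  proof (rule closedin_locally_finite_Union)
    show "locally_finite_in X (V ` A)"
      using V_discrete V_top by (rule locally_finite_in_discrete_family)
  qed (use clopen in blast)
  then have "openin X (topspace X - (\<Union>a\<in>A. V a))"
    by (rule openin_diff[OF openin_topspace])
  with clopen disjoint \<open>closedin X (topspace X - (\<Union>a\<in>A. V a))\<close> show ?thesis
    by (intro exI[of _ V] conjI)
qed

end
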